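(* The 1s frequency of $\mathcal{W}^1_n$ and the 1s frequency of $\mathcal{B}_n(11)$ both tend to $\frac{2-\varphi}{3-\varphi}$ as $n\to\infty$, where $\varphi=\frac{1+\sqrt5}{2}$.
   Context: A binary word is $1$-decreasing if for every maximal run of $0$s, of length $a>0$, together with the (possibly empty) maximal run of $1$s immediately following it, of length $b$, one has $a>b$; $\mathcal{W}^1_n$ is the set of $1$-decreasing words of length $n$. $\mathcal{B}_n(11)$ is the set of binary words of length $n$ with no two consecutive $1$s. The 1s frequency of a finite set of binary words is the total number of occurrences of $1$ in all words of the set divided by the total number of letters in all words of the set. *)

theory Defs
  imports Complex_Main
begin

text \<open>Binary words are lists of booleans; True is the letter 1, False the letter 0.\<close>

definition zero_one_block :: "bool list \<Rightarrow> nat \<Rightarrow> nat \<Rightarrow> nat \<Rightarrow> bool" where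
  "zero_one_block w i a b \<longleftrightarrow>
     0 < a \<and> i + a + b \<le> length w \<and>
     (i = 0 \<or> w ! (i - 1)) \<and>
     (\<forall>j. i \<le> j \<and> j < i + a \<longrightarrow> \<not> w ! j) \<and>
     (\<forall>j. i + a \<le> j \<and> j < i + a + b \<longrightarrow> w ! j) \<and>
     (i + a + b = length w \<or> \<not> w ! (i + a + b))"

definition one_decreasing :: "bool list \<Rightarrow> bool" where
  "one_decreasing w \<longleftrightarrow> (\<forall>i a b. zero_one_block w i a b \<longrightarrow> a > b)"

definition W1 :: "nat \<Rightarrow> bool list set" where
  "W1 n = {w. length w = n \<and> one_decreasing w}"

definition B11 :: "nat \<Rightarrow> bool list set" where
  "B11 n = {w. length w = n \<and> (\<forall>i. i + 1 < length w \<longrightarrow> \<not> (w ! i \<and> w ! (i + 1)))}"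

definition ones_count :: "bool list \<Rightarrow> nat" where
  "ones_count w = length (filter id w)"

definition ones_frequency :: "bool list set \<Rightarrow> real" where
  "ones_frequency S = real (\<Sum>w\<in>S. ones_count w) / real (\<Sum>w\<in>S. length w)"

definition golden_ratio :: real where
  "golden_ratio = (1 + sqrt 5) / 2"

end

theory Submission
  imports Defs "HOL-Number_Theory.Fib"
begin

text \<open>Both families have \<open>F (n + 2)\<close> words, \<open>F\<close> the Fibonacci numbers. Splitting off the prefix
  \<open>0\<close> or \<open>10\<close> shows that the total number \<open>S n\<close> of 1s in \<open>B11 n\<close> satisfies
  \<open>S (n + 2) = S (n + 1) + S n + F (n + 2)\<close>, whence \<open>5 S n = 2 n F n + n F (n + 1) + 2 F n\<close>.
  A 1-decreasing word is a run of 1s followed by a 1-decreasing word starting with 0; such a word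
  either stays 1-decreasing when its first 0 is deleted, or it begins with a block \<open>0^(b+1) 1^b\<close>.
  This leads to the same recurrences, and the 1s in \<open>W1 n\<close> outnumber those in \<open>B11 n\<close> by only
  \<open>F (n + 1) - 1 = o (n F (n + 2))\<close>. So both frequencies tend to the limit of
  \<open>(2 F n + F (n + 1)) / (5 F (n + 2))\<close>, which is \<open>(2 + \<phi>) / (5 \<phi>\<^sup>2) = (2 - \<phi>) / (3 - \<phi>)\<close>.\<close>

lemma ones_count_Nil [simp]: "ones_count [] = 0"
  by (simp add: ones_count_def)

lemma ones_count_Cons [simp]: "ones_count (x # w) = (if x then Suc (ones_count w) else ones_count w)"
  by (simp add: ones_count_def)

lemma ones_count_append [simp]: "ones_count (u @ v) = ones_count u + ones_count v"
  by (simp add: ones_count_def)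

lemma sum_ones_count_image_Cons:
  "(\<Sum>w\<in>Cons x ` S. ones_count w) = (\<Sum>w\<in>S. ones_count w) + (if x then card S else 0)"
proof -
  have "(\<Sum>w\<in>Cons x ` S. ones_count w) = (\<Sum>w\<in>S. ones_count w + (if x then 1 else 0))"
    by (simp add: sum.reindex)
  then show ?thesis
    by (simp add: sum.distrib)
qed

lemma ones_frequency_equal_lengths:
  assumes "\<And>w. w \<in> S \<Longrightarrow> length w = n"
  shows "ones_frequency S = real (\<Sum>w\<in>S. ones_count w) / (real n * real (card S))"
  using assms by (simp add: ones_frequency_def mult.commute)

lemma sum_div2_Suc_Suc:
  "(\<Sum>b=1..Suc (Suc m) div 2. f b (Suc (Suc m) - 2 * b)) = f 1 m + (\<Sum>b=1..m div 2. f (Suc b) (m - 2 * b))"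
proof -
  have "(\<Sum>b=1..Suc (Suc m) div 2. f b (Suc (Suc m) - 2 * b))
      = f 1 m + (\<Sum>b=Suc 1..Suc (m div 2). f b (Suc (Suc m) - 2 * b))"
    by (simp add: sum.atLeast_Suc_atMost add.assoc)
  also have "(\<Sum>b=Suc 1..Suc (m div 2). f b (Suc (Suc m) - 2 * b)) = (\<Sum>b=1..m div 2. f (Suc b) (m - 2 * b))"
    by (subst sum.shift_bounds_cl_Suc_ivl) simp
  finally show ?thesis .
qed

section \<open>Words without two consecutive 1s\<close>

lemma B11_length: "w \<in> B11 n \<Longrightarrow> length w = n"
  by (simp add: B11_def)

lemma finite_B11: "finite (B11 n)"
  by (rule finite_subset[OF _ finite_lists_length_eq[of UNIV n]]) (auto simp: B11_def)

lemma Cons_in_B11_iff: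
  "x # w \<in> B11 (Suc n) \<longleftrightarrow> w \<in> B11 n \<and> (x \<longrightarrow> w = [] \<or> \<not> hd w)"
  unfolding B11_def by (auto simp: nth_Cons hd_conv_nth split: nat.splits)

lemma B11_0: "B11 0 = {[]}"
  by (auto simp: B11_def)

lemma B11_1: "B11 (Suc 0) = {[False], [True]}"
  by (auto simp: B11_def length_Suc_conv)

lemma B11_Suc_Suc: "B11 (Suc (Suc n)) = Cons False ` B11 (Suc n) \<union> Cons True ` Cons False ` B11 n"
proof (intro equalityI subsetI)
  fix w assume "w \<in> B11 (Suc (Suc n))"
  then obtain x y v where "w = x # y # v" "x # y # v \<in> B11 (Suc (Suc n))"
    by (auto simp: B11_def length_Suc_conv)
  then show "w \<in> Cons False ` B11 (Suc n) \<union> Cons True ` Cons False ` B11 n"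
    by (cases x) (auto simp: Cons_in_B11_iff)
qed (auto simp: Cons_in_B11_iff)

lemma card_B11: "card (B11 n) = fib (Suc (Suc n))"
proof (induction n rule: fib.induct)
  case (3 n)
  have "card (B11 (Suc (Suc n))) = card (B11 (Suc n)) + card (B11 n)"
    unfolding B11_Suc_Suc
    by (subst card_Un_disjoint) (auto simp: finite_B11 card_image)
  then show ?case using 3 by simp
qed (simp_all add: B11_0 B11_1)

lemma sum_ones_B11_Suc_Suc:
  "(\<Sum>w\<in>B11 (Suc (Suc n)). ones_count w)
     = (\<Sum>w\<in>B11 (Suc n). ones_count w) + (\<Sum>w\<in>B11 n. ones_count w) + fib (Suc (Suc n))"
  unfolding B11_Suc_Suc
  by (subst sum.union_disjoint)
    (auto simp: finite_B11 sum_ones_count_image_Cons card_image card_B11 simp del: fib.simps)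

lemma sum_ones_B11:
  "5 * (\<Sum>w\<in>B11 n. ones_count w) = 2 * n * fib n + n * fib (Suc n) + 2 * fib n"
proof (induction n rule: fib.induct)
  case (3 n)
  have "5 * (\<Sum>w\<in>B11 (Suc (Suc n)). ones_count w)
      = (2 * Suc n * fib (Suc n) + Suc n * fib (Suc (Suc n)) + 2 * fib (Suc n))
        + (2 * n * fib n + n * fib (Suc n) + 2 * fib n) + 5 * fib (Suc (Suc n))"
    by (simp only: sum_ones_B11_Suc_Suc add_mult_distrib2 3)
  also have "\<dots> = 2 * Suc (Suc n) * fib (Suc (Suc n)) + Suc (Suc n) * fib (Suc (Suc (Suc n))) + 2 * fib (Suc (Suc n))"
    by (simp add: algebra_simps)
  finally show ?case .
qed (simp_all add: B11_0 B11_1)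

section \<open>Cutting 1-decreasing words into blocks\<close>

lemma all_interval_conv_shift:
  "(\<forall>j. (i::nat) \<le> j \<and> j < i + a \<longrightarrow> P j) \<longleftrightarrow> (\<forall>j<a. P (i + j))"
proof (intro iffI allI impI)
  fix j assume "\<forall>j. i \<le> j \<and> j < i + a \<longrightarrow> P j" "j < a"
  then show "P (i + j)" by (metis add_less_cancel_left le_add1)
next
  fix j assume "\<forall>j<a. P (i + j)" "i \<le> j \<and> j < i + a"
  then show "P j" by (metis add_diff_inverse_nat add_less_cancel_left not_less)
qed

lemma zero_one_block_iff:
  "zero_one_block w i a b \<longleftrightarrow>
     0 < a \<and> i + a + b \<le> length w \<and> (i = 0 \<or> w ! (i - 1)) \<and>
     (\<forall>j<a. \<not> w ! (i + j)) \<and> (\<forall>j<b. w ! (i + a + j)) \<and>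
     (i + a + b = length w \<or> \<not> w ! (i + a + b))"
  unfolding zero_one_block_def all_interval_conv_shift[of i] all_interval_conv_shift[of "i + a"] ..

lemma zero_one_block_append_right:
  assumes "u \<noteq> []" "last u"
  shows "zero_one_block (u @ v) (length u + i) a b \<longleftrightarrow> zero_one_block v i a b"
proof -
  have "(length u + i = 0 \<or> (u @ v) ! (length u + i - 1)) \<longleftrightarrow> (i = 0 \<or> v ! (i - 1))"
    using assms by (cases i) (auto simp: nth_append last_conv_nth)
  then show ?thesis
    unfolding zero_one_block_iff by (simp add: add.assoc)
qed

lemma zero_one_block_append_left:
  assumes "u \<noteq> []" "last u" "v = [] \<or> \<not> hd v" "i < length u"
  shows "zero_one_block (u @ v) i a b \<longleftrightarrow> zero_one_block u i a b"
proof
  assume block: "zero_one_block (u @ v) i a b"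
  then have zeros: "\<forall>j<a. \<not> (u @ v) ! (i + j)" and ones: "\<forall>j<b. (u @ v) ! (i + a + j)"
    and "i + a + b \<le> length u + length v"
    unfolding zero_one_block_iff by auto
  \<comment> \<open>the block cannot reach across the boundary: u ends with a 1 and v starts with a 0\<close>
  have "i + a < length u"
  proof (rule ccontr)
    assume "\<not> i + a < length u"
    then have "\<not> (u @ v) ! (length u - 1)"
      using zeros[rule_format, of "length u - 1 - i"] assms(4) by simp
    then show False
      using assms(1,2) by (simp add: nth_append last_conv_nth)
  qed
  have "i + a + b \<le> length u"
  proof (rule ccontr)
    assume "\<not> i + a + b \<le> length u"
    then have "(u @ v) ! length u" "v \<noteq> []"
      using ones[rule_format, of "length u - (i + a)"] \<open>i + a < length u\<close>
        \<open>i + a + b \<le> length u + length v\<close> by auto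
    then show False
      using assms(3) by (simp add: nth_append hd_conv_nth)
  qed
  then show "zero_one_block u i a b"
    using block unfolding zero_one_block_iff by (auto simp: nth_append)
next
  assume "zero_one_block u i a b"
  then show "zero_one_block (u @ v) i a b"
    using assms unfolding zero_one_block_iff by (auto simp: nth_append hd_conv_nth)
qed

lemma one_decreasing_append:
  assumes "u \<noteq> []" "last u" "v = [] \<or> \<not> hd v"
  shows "one_decreasing (u @ v) \<longleftrightarrow> one_decreasing u \<and> one_decreasing v"
proof
  assume od: "one_decreasing (u @ v)"
  show "one_decreasing u \<and> one_decreasing v"
    unfolding one_decreasing_def
  proof (intro conjI allI impI)
    fix i a b assume block: "zero_one_block u i a b"
    then have "i < length u"
      unfolding zero_one_block_def by simp
    with block have "zero_one_block (u @ v) i a b"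
      using zero_one_block_append_left[OF assms] by simp
    then show "b < a"
      using od unfolding one_decreasing_def by blast
  next
    fix i a b assume "zero_one_block v i a b"
    then have "zero_one_block (u @ v) (length u + i) a b"
      using zero_one_block_append_right[OF assms(1,2)] by simp
    then show "b < a"
      using od unfolding one_decreasing_def by blast
  qed
next
  assume od: "one_decreasing u \<and> one_decreasing v"
  show "one_decreasing (u @ v)"
    unfolding one_decreasing_def
  proof (intro allI impI)
    fix i a b assume block: "zero_one_block (u @ v) i a b"
    show "b < a"
    proof (cases "i < length u")
      case True
      then have "zero_one_block u i a b"
        using block zero_one_block_append_left[OF assms] by simp
      then show ?thesis
        using od unfolding one_decreasing_def by blast
    next
      case False
      then obtain k where "i = length u + k"
        using le_Suc_ex by (metis not_less)
      then have "zero_one_block v k a b"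
        using block zero_one_block_append_right[OF assms(1,2)] by simp
      then show ?thesis
        using od unfolding one_decreasing_def by blast
    qed
  qed
qed

lemma one_decreasing_Cons_True: "one_decreasing (True # w) \<longleftrightarrow> one_decreasing w"
proof -
  have shift: "zero_one_block (True # w) (Suc i) a b \<longleftrightarrow> zero_one_block w i a b" for i a b
    using zero_one_block_append_right[of "[True]" w i a b] by simp
  have "0 < i" if "zero_one_block (True # w) i a b" for i a b
    using that unfolding zero_one_block_iff by (cases i) auto
  then show ?thesis
    unfolding one_decreasing_def using shift by (metis gr0_implies_Suc)
qed

definition zeros_ones :: "nat \<Rightarrow> nat \<Rightarrow> bool list" where
  "zeros_ones a b = replicate a False @ replicate b True"

lemma length_zeros_ones [simp]: "length (zeros_ones a b) = a + b"
  by (simp add: zeros_ones_def)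

lemma nth_zeros_ones: "k < a + b \<Longrightarrow> zeros_ones a b ! k \<longleftrightarrow> a \<le> k"
  by (simp add: zeros_ones_def nth_append)

lemma ones_count_zeros_ones [simp]: "ones_count (zeros_ones a b) = b"
  by (simp add: zeros_ones_def ones_count_def)

lemma zero_one_block_zeros_ones:
  assumes "zero_one_block (zeros_ones a b) i a' b'" "0 < b'"
  shows "a' = a \<and> b' \<le> b"
proof -
  let ?w = "zeros_ones a b"
  from assms(1) have "0 < a'" and len: "i + a' + b' \<le> a + b" and "i = 0 \<or> ?w ! (i - 1)"
    and zeros: "\<forall>j<a'. \<not> ?w ! (i + j)" and ones: "\<forall>j<b'. ?w ! (i + a' + j)"
    unfolding zero_one_block_iff by auto
  have "i < a"
    using zeros[rule_format, of 0] \<open>0 < a'\<close> len by (simp add: nth_zeros_ones)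
  then have "i = 0"
    using \<open>i = 0 \<or> ?w ! (i - 1)\<close> len by (auto simp: nth_zeros_ones)
  moreover have "a' - 1 < a"
    using zeros[rule_format, of "a' - 1"] \<open>0 < a'\<close> len \<open>i = 0\<close> by (simp add: nth_zeros_ones)
  moreover have "a \<le> a'"
    using ones[rule_format, of 0] assms(2) len \<open>i = 0\<close> by (simp add: nth_zeros_ones)
  ultimately show ?thesis
    using len by auto
qed

lemma one_decreasing_zeros_ones: "one_decreasing (zeros_ones a b) \<longleftrightarrow> a = 0 \<or> b < a"
proof
  assume "one_decreasing (zeros_ones a b)"
  moreover have "0 < a \<Longrightarrow> zero_one_block (zeros_ones a b) 0 a b"
    unfolding zero_one_block_iff by (simp add: nth_zeros_ones)
  ultimately show "a = 0 \<or> b < a"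
    unfolding one_decreasing_def by blast
next
  assume "a = 0 \<or> b < a"
  moreover have "\<not> zero_one_block (zeros_ones 0 b) i a' b'" for i a' b'
    unfolding zero_one_block_iff by (auto simp: zeros_ones_def)
  moreover have "b' < a'" if "zero_one_block (zeros_ones a b) i a' b'" "b < a" for i a' b'
    using zero_one_block_zeros_ones[OF that(1)] that unfolding zero_one_block_def
    by (cases "b' = 0") auto
  ultimately show "one_decreasing (zeros_ones a b)"
    unfolding one_decreasing_def by blast
qed

lemma zeros_ones_decomposition:
  obtains a b r where "w = zeros_ones a b @ r" "r = [] \<or> \<not> hd r" "b = 0 \<longrightarrow> r = []"
proof -
  have "\<exists>a b r. w = zeros_ones a b @ r \<and> (r = [] \<or> \<not> hd r) \<and> (b = 0 \<longrightarrow> r = [])"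
  proof (induction w)
    case Nil
    show ?case by (intro exI[of _ 0]) (simp add: zeros_ones_def)
  next
    case (Cons x w)
    then obtain a b r where w: "w = zeros_ones a b @ r" "r = [] \<or> \<not> hd r" "b = 0 \<longrightarrow> r = []"
      by blast
    consider "\<not> x" | "x" "a = 0" | "x" "0 < a"
      by blast
    then show ?case
    proof cases
      case 1
      then show ?thesis using w by (intro exI[of _ "Suc a"] exI[of _ b] exI[of _ r]) (simp add: zeros_ones_def)
    next
      case 2
      then show ?thesis using w by (intro exI[of _ 0] exI[of _ "Suc b"] exI[of _ r]) (simp add: zeros_ones_def)
    next
      case 3
      then show ?thesis using w by (intro exI[of _ 0] exI[of _ 1] exI[of _ w]) (simp add: zeros_ones_def)
    qed
  qed
  then show ?thesis using that by blast
qed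

lemma one_decreasing_zeros_ones_append:
  assumes "0 < b" "r = [] \<or> \<not> hd r"
  shows "one_decreasing (zeros_ones a b @ r) \<longleftrightarrow> (a = 0 \<or> b < a) \<and> one_decreasing r"
proof -
  have "zeros_ones a b \<noteq> []" "last (zeros_ones a b)"
    using assms(1) by (simp_all add: zeros_ones_def)
  then show ?thesis
    using one_decreasing_append assms(2) one_decreasing_zeros_ones by blast
qed

lemma one_decreasing_replicate_False: "one_decreasing (replicate n False)"
  using one_decreasing_zeros_ones[of n 0] by (auto simp: zeros_ones_def)

section \<open>Counting 1-decreasing words\<close>

lemma W1_length: "w \<in> W1 n \<Longrightarrow> length w = n"
  by (simp add: W1_def)

lemma finite_W1: "finite (W1 n)"
  by (rule finite_subset[OF _ finite_lists_length_eq[of UNIV n]]) (auto simp: W1_def)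

lemma W1_0: "W1 0 = {[]}"
  using one_decreasing_replicate_False[of 0] by (auto simp: W1_def)

definition W1_zero_start :: "nat \<Rightarrow> bool list set" where
  "W1_zero_start n = {w \<in> W1 n. w = [] \<or> \<not> hd w}"

lemma finite_W1_zero_start: "finite (W1_zero_start n)"
  using finite_W1 by (simp add: W1_zero_start_def)

lemma W1_zero_start_0: "W1_zero_start 0 = {[]}"
  by (auto simp: W1_zero_start_def W1_0)

lemma W1_Suc: "W1 (Suc n) = Cons True ` W1 n \<union> W1_zero_start (Suc n)"
proof (intro equalityI subsetI)
  fix w assume "w \<in> W1 (Suc n)"
  then obtain x v where "w = x # v" "length v = n" "one_decreasing (x # v)"
    by (auto simp: W1_def length_Suc_conv)
  then show "w \<in> Cons True ` W1 n \<union> W1_zero_start (Suc n)"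
    by (cases x) (auto simp: W1_def W1_zero_start_def one_decreasing_Cons_True)
qed (auto simp: W1_def W1_zero_start_def one_decreasing_Cons_True)

lemma Cons_False_in_W1_zero_start:
  assumes "w \<in> W1_zero_start n"
  shows "False # w \<in> W1_zero_start (Suc n)"
proof -
  obtain a b r where w: "w = zeros_ones a b @ r" "r = [] \<or> \<not> hd r" "b = 0 \<longrightarrow> r = []"
    using zeros_ones_decomposition .
  have "one_decreasing (False # w)"
  proof (cases "b = 0")
    case True
    then show ?thesis
      using w one_decreasing_replicate_False[of "Suc a"] by (simp add: zeros_ones_def)
  next
    case False
    then have "0 < a"
      using assms w by (cases a) (auto simp: W1_zero_start_def zeros_ones_def)
    then have "one_decreasing (zeros_ones (Suc a) b @ r)"
      using assms w False by (simp add: W1_zero_start_def W1_def one_decreasing_zeros_ones_append)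
    moreover have "False # w = zeros_ones (Suc a) b @ r"
      using w by (simp add: zeros_ones_def)
    ultimately show ?thesis
      by simp
  qed
  then show ?thesis
    using assms by (simp add: W1_zero_start_def W1_def)
qed

text \<open>The words of \<open>W1_zero_start (Suc m)\<close> from which the leading 0 cannot be deleted.\<close>

definition W1_tight_start :: "nat \<Rightarrow> bool list set" where
  "W1_tight_start m =
     (\<lambda>(b, r). zeros_ones (Suc b) b @ r) ` (SIGMA b:{1..m div 2}. W1_zero_start (m - 2 * b))"

lemma W1_zero_start_Suc:
  "W1_zero_start (Suc m) = Cons False ` W1_zero_start m \<union> W1_tight_start m"
proof (intro equalityI subsetI)
  fix w assume w_in: "w \<in> W1_zero_start (Suc m)"
  obtain a b r where w: "w = zeros_ones a b @ r" "r = [] \<or> \<not> hd r" "b = 0 \<longrightarrow> r = []"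
    using zeros_ones_decomposition .
  have "0 < a"
    using w_in w by (cases a; cases b) (auto simp: W1_zero_start_def W1_def zeros_ones_def)
  show "w \<in> Cons False ` W1_zero_start m \<union> W1_tight_start m"
  proof (cases "b = 0")
    case True
    then have "w = False # replicate m False"
      using w w_in \<open>0 < a\<close> by (cases a) (auto simp: W1_zero_start_def W1_def zeros_ones_def)
    moreover have "replicate m False \<in> W1_zero_start m"
      using one_decreasing_replicate_False[of m] by (auto simp: W1_zero_start_def W1_def)
    ultimately show ?thesis
      by blast
  next
    case False
    then have "b < a" "one_decreasing r" "a + b + length r = Suc m"
      using w w_in \<open>0 < a\<close> by (auto simp: W1_zero_start_def W1_def one_decreasing_zeros_ones_append)
    show ?thesis
    proof (cases "a = Suc b")
      case True
      then have "(b, r) \<in> (SIGMA b:{1..m div 2}. W1_zero_start (m - 2 * b))"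
        using False \<open>a + b + length r = Suc m\<close> w \<open>one_decreasing r\<close>
        by (auto simp: W1_zero_start_def W1_def)
      then show ?thesis
        unfolding W1_tight_start_def using w True by force
    next
      case False
      have "one_decreasing (zeros_ones (a - 1) b @ r)"
        using w \<open>b \<noteq> 0\<close> \<open>b < a\<close> False \<open>one_decreasing r\<close>
        by (simp add: one_decreasing_zeros_ones_append)
      moreover have "\<not> hd (zeros_ones (a - 1) b @ r)"
        using \<open>b < a\<close> False by (cases "a - 1") (auto simp: zeros_ones_def)
      ultimately have "zeros_ones (a - 1) b @ r \<in> W1_zero_start m"
        using \<open>a + b + length r = Suc m\<close> \<open>0 < a\<close> by (simp add: W1_zero_start_def W1_def)
      moreover have "w = False # (zeros_ones (a - 1) b @ r)"
        using w \<open>0 < a\<close> by (cases a) (auto simp: zeros_ones_def)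
      ultimately show ?thesis
        by blast
    qed
  qed
next
  fix w assume "w \<in> Cons False ` W1_zero_start m \<union> W1_tight_start m"
  then show "w \<in> W1_zero_start (Suc m)"
  proof
    assume "w \<in> Cons False ` W1_zero_start m"
    then show ?thesis
      using Cons_False_in_W1_zero_start by blast
  next
    assume "w \<in> W1_tight_start m"
    then obtain b r where "1 \<le> b" "2 * b \<le> m" "r \<in> W1_zero_start (m - 2 * b)" "w = zeros_ones (Suc b) b @ r"
      unfolding W1_tight_start_def by auto
    moreover have "one_decreasing (zeros_ones (Suc b) b @ r)"
      using \<open>1 \<le> b\<close> \<open>r \<in> W1_zero_start (m - 2 * b)\<close>
      by (simp add: W1_zero_start_def W1_def one_decreasing_zeros_ones_append)
    ultimately show ?thesis
      by (auto simp: W1_zero_start_def W1_def zeros_ones_def)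
  qed
qed

lemma takeWhile_Not_zeros_ones_append:
  "0 < b \<Longrightarrow> takeWhile Not (zeros_ones a b @ r) = replicate a False"
  unfolding zeros_ones_def by (induction a) (auto simp: gr0_conv_Suc)

lemma inj_on_W1_tight_start:
  "inj_on (\<lambda>(b, r). zeros_ones (Suc b) b @ r) (SIGMA b:{1..m div 2}. W1_zero_start (m - 2 * b))"
proof (rule inj_onI, clarify)
  fix b r b' r'
  assume "b \<in> {1..m div 2}" "b' \<in> {1..m div 2}" and eq: "zeros_ones (Suc b) b @ r = zeros_ones (Suc b') b' @ r'"
  then have "replicate (Suc b) False = replicate (Suc b') False"
    using takeWhile_Not_zeros_ones_append[of b "Suc b" r] takeWhile_Not_zeros_ones_append[of b' "Suc b'" r'] by simp
  then have "b = b'"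
    by simp
  with eq show "b = b' \<and> r = r'"
    by simp
qed

lemma W1_zero_start_Suc_disjoint: "Cons False ` W1_zero_start m \<inter> W1_tight_start m = {}"
proof -
  have "False # v \<noteq> zeros_ones (Suc b) b @ r"
    if "v \<in> W1_zero_start m" "1 \<le> b" "r = [] \<or> \<not> hd r" for v b r
  proof
    assume "False # v = zeros_ones (Suc b) b @ r"
    then have "v = zeros_ones b b @ r"
      by (simp add: zeros_ones_def)
    then show False
      using that by (simp add: W1_zero_start_def W1_def one_decreasing_zeros_ones_append)
  qed
  then show ?thesis
    unfolding W1_tight_start_def W1_zero_start_def by fastforce
qed

lemma card_W1_zero_start_Suc:
  "card (W1_zero_start (Suc m)) = card (W1_zero_start m) + (\<Sum>b=1..m div 2. card (W1_zero_start (m - 2 * b)))"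
proof -
  have "card (W1_tight_start m) = (\<Sum>b=1..m div 2. card (W1_zero_start (m - 2 * b)))"
    unfolding W1_tight_start_def
    by (subst card_image[OF inj_on_W1_tight_start]) (simp add: finite_W1_zero_start)
  moreover have "finite (W1_tight_start m)"
    by (simp add: W1_tight_start_def finite_W1_zero_start)
  ultimately show ?thesis
    unfolding W1_zero_start_Suc using W1_zero_start_Suc_disjoint
    by (simp add: card_Un_disjoint finite_W1_zero_start card_image)
qed

lemma sum_ones_W1_zero_start_Suc:
  "(\<Sum>w\<in>W1_zero_start (Suc m). ones_count w) = (\<Sum>w\<in>W1_zero_start m. ones_count w) +
     (\<Sum>b=1..m div 2. b * card (W1_zero_start (m - 2 * b)) + (\<Sum>w\<in>W1_zero_start (m - 2 * b). ones_count w))"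
proof -
  have tight: "(\<Sum>w\<in>W1_tight_start m. ones_count w) = (\<Sum>b=1..m div 2.
      b * card (W1_zero_start (m - 2 * b)) + (\<Sum>w\<in>W1_zero_start (m - 2 * b). ones_count w))"
  proof -
    have "(\<Sum>w\<in>W1_tight_start m. ones_count w)
        = (\<Sum>(b, r)\<in>(SIGMA b:{1..m div 2}. W1_zero_start (m - 2 * b)). b + ones_count r)"
      unfolding W1_tight_start_def
      by (subst sum.reindex[OF inj_on_W1_tight_start]) (simp add: case_prod_unfold)
    then show ?thesis
      by (simp add: sum.Sigma[symmetric] finite_W1_zero_start sum.distrib mult.commute)
  qed
  have "finite (W1_tight_start m)"
    by (simp add: W1_tight_start_def finite_W1_zero_start)
  then show ?thesis
    unfolding W1_zero_start_Suc using W1_zero_start_Suc_disjoint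
    by (simp add: sum.union_disjoint finite_W1_zero_start sum_ones_count_image_Cons tight)
qed

lemma card_W1_zero_start_Suc_Suc_Suc:
  "card (W1_zero_start (Suc (Suc (Suc m)))) = card (W1_zero_start (Suc (Suc m))) + card (W1_zero_start (Suc m))"
proof -
  let ?c = "\<lambda>k. card (W1_zero_start k)"
  have "?c (Suc (Suc (Suc m))) = ?c (Suc (Suc m)) + (?c m + (\<Sum>b=1..m div 2. ?c (m - 2 * b)))"
    using card_W1_zero_start_Suc[of "Suc (Suc m)"] sum_div2_Suc_Suc[of "\<lambda>b k. ?c k" m] by simp
  then show ?thesis
    using card_W1_zero_start_Suc[of m] by simp
qed

lemma sum_ones_W1_zero_start_Suc_Suc_Suc:
  "(\<Sum>w\<in>W1_zero_start (Suc (Suc (Suc m))). ones_count w) = (\<Sum>w\<in>W1_zero_start (Suc (Suc m)). ones_count w)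
     + (\<Sum>w\<in>W1_zero_start (Suc m). ones_count w) + card (W1_zero_start (Suc m))"
proof -
  let ?c = "\<lambda>k. card (W1_zero_start k)" and ?s = "\<lambda>k. \<Sum>w\<in>W1_zero_start k. ones_count w"
  have "?s (Suc (Suc (Suc m))) = ?s (Suc (Suc m)) + (?c m + ?s m)
      + (\<Sum>b=1..m div 2. Suc b * ?c (m - 2 * b) + ?s (m - 2 * b))"
    using sum_ones_W1_zero_start_Suc[of "Suc (Suc m)"] sum_div2_Suc_Suc[of "\<lambda>b k. b * ?c k + ?s k" m]
    by simp
  also have "\<dots> = ?s (Suc (Suc m)) + (?c m + (\<Sum>b=1..m div 2. ?c (m - 2 * b)))
      + (?s m + (\<Sum>b=1..m div 2. b * ?c (m - 2 * b) + ?s (m - 2 * b)))"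
    by (simp add: sum.distrib)
  finally show ?thesis
    using card_W1_zero_start_Suc[of m] sum_ones_W1_zero_start_Suc[of m] by simp
qed

lemma card_W1_zero_start: "card (W1_zero_start (Suc n)) = fib (Suc n)"
proof (induction n rule: fib.induct)
  case 1
  show ?case
    using card_W1_zero_start_Suc[of 0] by (simp add: W1_zero_start_0)
next
  case 2
  show ?case
    using card_W1_zero_start_Suc[of 1] card_W1_zero_start_Suc[of 0] by (simp add: W1_zero_start_0)
next
  case (3 n)
  then show ?case
    using card_W1_zero_start_Suc_Suc_Suc[of n] by simp
qed

lemma sum_ones_W1_zero_start:
  "(\<Sum>w\<in>W1_zero_start (Suc (Suc n)). ones_count w) = (\<Sum>w\<in>B11 n. ones_count w)"
proof (induction n rule: fib.induct)
  case 1
  show ?case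
    using sum_ones_W1_zero_start_Suc[of 1] sum_ones_W1_zero_start_Suc[of 0] by (simp add: W1_zero_start_0 B11_0)
next
  case 2
  show ?case
    using sum_ones_W1_zero_start_Suc[of 2] sum_ones_W1_zero_start_Suc[of 1] sum_ones_W1_zero_start_Suc[of 0]
    by (simp add: W1_zero_start_0 B11_1 numeral_2_eq_2)
next
  case (3 n)
  then show ?case
    using sum_ones_W1_zero_start_Suc_Suc_Suc[of "Suc n"] sum_ones_B11_Suc_Suc[of n] card_W1_zero_start[of "Suc n"]
    by (simp del: fib.simps)
qed

lemma card_W1: "card (W1 n) = fib (Suc (Suc n))"
proof (induction n)
  case 0
  show ?case by (simp add: W1_0)
next
  case (Suc n)
  have "card (W1 (Suc n)) = card (W1 n) + card (W1_zero_start (Suc n))"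
    unfolding W1_Suc by (subst card_Un_disjoint) (auto simp: finite_W1 finite_W1_zero_start card_image W1_zero_start_def)
  then show ?case
    using Suc card_W1_zero_start[of n] by simp
qed

lemma sum_ones_W1:
  "(\<Sum>w\<in>W1 n. ones_count w) + 1 = (\<Sum>w\<in>B11 n. ones_count w) + fib (Suc n)"
proof (induction n)
  case 0
  show ?case by (simp add: W1_0 B11_0)
next
  case (Suc n)
  have "(\<Sum>w\<in>W1 (Suc n). ones_count w)
      = (\<Sum>w\<in>W1 n. ones_count w) + fib (Suc (Suc n)) + (\<Sum>w\<in>W1_zero_start (Suc n). ones_count w)"
    unfolding W1_Suc
    by (subst sum.union_disjoint)
      (auto simp: finite_W1 finite_W1_zero_start sum_ones_count_image_Cons card_W1 W1_zero_start_def
        simp del: fib.simps)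
  moreover have "(\<Sum>w\<in>B11 (Suc n). ones_count w)
      = (\<Sum>w\<in>B11 n. ones_count w) + fib (Suc n) + (\<Sum>w\<in>W1_zero_start (Suc n). ones_count w)"
  proof (cases n)
    case 0
    then show ?thesis
      using sum_ones_W1_zero_start_Suc[of 0] by (simp add: B11_0 B11_1 W1_zero_start_0)
  next
    case (Suc k)
    then show ?thesis
      using sum_ones_B11_Suc_Suc[of k] sum_ones_W1_zero_start[of k] by simp
  qed
  ultimately show ?case
    using Suc.IH by simp
qed

section \<open>Limits\<close>

lemma golden_ratio_gt_1: "1 < golden_ratio"
  by (simp add: golden_ratio_def)

lemma golden_ratio_less_3: "golden_ratio < 3"
  by (simp add: golden_ratio_def real_less_lsqrt)

lemma golden_ratio_squared: "golden_ratio ^ 2 = golden_ratio + 1"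
  by (simp add: golden_ratio_def power2_eq_square field_simps)

lemma fib_ratio_tendsto: "(\<lambda>n. real (fib (n + k)) / real (fib n)) \<longlonglongrightarrow> golden_ratio ^ k"
proof -
  define a where "a n = real (fib n) / (golden_ratio ^ n / sqrt 5)" for n
  have "a \<longlonglongrightarrow> 1"
    unfolding a_def golden_ratio_def by (rule fib_asymptotics)
  then have "(\<lambda>n. a (n + k) / a n * golden_ratio ^ k) \<longlonglongrightarrow> 1 / 1 * golden_ratio ^ k"
    by (intro tendsto_intros LIMSEQ_ignore_initial_segment) auto
  moreover have "a (n + k) / a n * golden_ratio ^ k = real (fib (n + k)) / real (fib n)" for n
    using golden_ratio_gt_1 by (cases "fib n = 0") (simp_all add: a_def field_simps power_add)
  ultimately show ?thesis
    by simp
qed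

lemma ones_frequency_B11_tendsto:
  "(\<lambda>n. ones_frequency (B11 n)) \<longlonglongrightarrow> (2 + golden_ratio) / (5 * golden_ratio ^ 2)"
proof -
  define r where "r k n = real (fib (n + k)) / real (fib n)" for k n
  have "(\<lambda>n. (2 + r 1 n) / (5 * r 2 n) + 2 / (5 * r 2 n) * inverse (real n))
      \<longlonglongrightarrow> (2 + golden_ratio ^ 1) / (5 * golden_ratio ^ 2) + 2 / (5 * golden_ratio ^ 2) * 0"
    unfolding r_def using golden_ratio_gt_1
    by (intro tendsto_intros fib_ratio_tendsto lim_inverse_n) auto
  moreover have "ones_frequency (B11 n) = (2 + r 1 n) / (5 * r 2 n) + 2 / (5 * r 2 n) * inverse (real n)"
    if "0 < n" for n
  proof -
    define S where "S = real (\<Sum>w\<in>B11 n. ones_count w)"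
    have "ones_frequency (B11 n) = S / (real n * real (fib (Suc (Suc n))))"
      unfolding S_def using ones_frequency_equal_lengths[OF B11_length] card_B11 by simp
    moreover have "S = (2 * n * fib n + n * fib (Suc n) + 2 * fib n) / 5"
      unfolding S_def using arg_cong[OF sum_ones_B11[of n], of real] by simp
    ultimately have freq: "ones_frequency (B11 n)
        = (2 * n * fib n + n * fib (Suc n) + 2 * fib n) / (5 * (real n * real (fib (Suc (Suc n)))))"
      by (simp del: fib.simps)
    have "0 < fib n" "0 < fib (Suc (Suc n))"
      using that by (simp_all add: fib_neq_0_nat del: fib.simps)
    then show ?thesis
      using that unfolding freq r_def by (simp add: field_simps del: fib.simps)
  qed
  then have "\<forall>\<^sub>F n in sequentially.
      (2 + r 1 n) / (5 * r 2 n) + 2 / (5 * r 2 n) * inverse (real n) = ones_frequency (B11 n)"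
    by (simp add: eventually_at_top_dense)
  ultimately show ?thesis
    by (auto intro: Lim_transform_eventually)
qed

lemma ones_frequency_W1_tendsto:
  "(\<lambda>n. ones_frequency (W1 n)) \<longlonglongrightarrow> (2 + golden_ratio) / (5 * golden_ratio ^ 2)"
proof -
  define c where "c n = (real (fib (Suc n)) - 1) / (real n * real (fib (Suc (Suc n))))" for n
  have "ones_frequency (W1 n) = ones_frequency (B11 n) + c n" for n
  proof -
    define SW SB where "SW = real (\<Sum>w\<in>W1 n. ones_count w)" and "SB = real (\<Sum>w\<in>B11 n. ones_count w)"
    have "ones_frequency (W1 n) = SW / (real n * real (fib (Suc (Suc n))))"
      unfolding SW_def using ones_frequency_equal_lengths[OF W1_length] card_W1 by simp
    moreover have "ones_frequency (B11 n) = SB / (real n * real (fib (Suc (Suc n))))"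
      unfolding SB_def using ones_frequency_equal_lengths[OF B11_length] card_B11 by simp
    moreover have "SW = SB + (real (fib (Suc n)) - 1)"
      unfolding SW_def SB_def using arg_cong[OF sum_ones_W1[of n], of real] by simp
    ultimately show ?thesis
      unfolding c_def by (simp add: add_divide_distrib)
  qed
  moreover have "c \<longlonglongrightarrow> 0"
  proof (rule tendsto_sandwich[of "\<lambda>_. 0" c sequentially "\<lambda>n. inverse (real n)"])
    have "0 \<le> c n \<and> c n \<le> inverse (real n)" for n
    proof (cases "n = 0")
      case False
      have "1 \<le> fib (Suc n)" and fib_le: "fib (Suc n) \<le> fib (Suc (Suc n))"
        using fib_neq_0_nat[of "Suc n"] fib_Suc_mono[of "Suc n"] by (simp_all del: fib.simps)
      have mono: "real n * real (fib (Suc n)) \<le> real n * real (fib (Suc (Suc n)))"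
        using fib_le by (intro mult_left_mono) simp_all
      show ?thesis
        using False \<open>1 \<le> fib (Suc n)\<close> fib_le
        by (simp add: c_def field_simps del: fib.simps) (use mono in linarith)
    qed (simp add: c_def)
    then show "\<forall>\<^sub>F n in sequentially. 0 \<le> c n"
      and "\<forall>\<^sub>F n in sequentially. c n \<le> inverse (real n)"
      by simp_all
  qed (auto intro: lim_inverse_n)
  ultimately show ?thesis
    using tendsto_add[OF ones_frequency_B11_tendsto] by fastforce
qed

lemma golden_ratio_frequency_identity:
  "(2 + golden_ratio) / (5 * golden_ratio ^ 2) = (2 - golden_ratio) / (3 - golden_ratio)"
proof -
  have "(2 + golden_ratio) * (3 - golden_ratio) = 5" "(2 - golden_ratio) * (5 * golden_ratio ^ 2) = 5"
    using golden_ratio_squared by (simp_all add: algebra_simps power2_eq_square)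
  then show ?thesis
    using golden_ratio_gt_1 golden_ratio_less_3 by (subst frac_eq_eq) auto
qed

theorem corollary4:
  shows "((\<lambda>n. ones_frequency (W1 n)) \<longlonglongrightarrow> (2 - golden_ratio) / (3 - golden_ratio)) \<and>
         ((\<lambda>n. ones_frequency (B11 n)) \<longlonglongrightarrow> (2 - golden_ratio) / (3 - golden_ratio))"
  using ones_frequency_W1_tendsto ones_frequency_B11_tendsto
  unfolding golden_ratio_frequency_identity by blast

end
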